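(* Let $\mathbf V$ be a monoid variety such that the one-letter word $t$ is an isoterm for $\mathbf V$ and $\mathbf V$ satisfies $xtx\approx xtx^2$. If $\mathbb M_\gamma(a^+t)\not\subseteq\mathbf V$, then $\mathbf V$ satisfies $xtxs\approx xtxsx$.
   Context: Words are elements of the free monoid $\mathfrak A^*$ over a countably infinite alphabet. A word $\mathbf w$ is an isoterm for $\mathbf V$ if $\mathbf V$ satisfies no identity $\mathbf w\approx\mathbf w'$ with $\mathbf w'\ne\mathbf w$. Let $\tau_1$ be the congruence on $\mathfrak A^*$ generated by $a=aa$ for all letters $a$; $\mathbf u\,\gamma\,\mathbf v$ iff $\mathbf u\,\tau_1\,\mathbf v$ and $\mathbf u,\mathbf v$ have the same set of letters occurring at least twice. For $\gamma$-classes write $\mathtt v\le\mathtt u$ iff $\mathtt u=\mathtt p\mathtt v\mathtt s$ in $\mathfrak A^*/\gamma$. For a set $\mathtt W$ of $\gamma$-classes, $M_\gamma(\mathtt W)$ is the Rees quotient of $\mathfrak A^*/\gamma$ by the ideal of classes not $\le$ any element of $\mathtt W$, and $\mathbb M_\gamma(\mathtt W)$ is the monoid variety it generates. Here $a^+t$ denotes the $\gamma$-class $\{a^kt:k\ge2\}$. *)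

theory Defs
  imports Main
begin

type_synonym word = "nat list"

definition subst :: "(nat \<Rightarrow> word) \<Rightarrow> word \<Rightarrow> word" where
  "subst \<sigma> u = concat (map \<sigma> u)"

text \<open>A monoid variety is represented by its equational theory (Birkhoff):
  a fully invariant congruence on the free monoid. V satisfies u \<approx> v iff (u,v) \<in> E.\<close>
definition equational_theory :: "(word \<times> word) set \<Rightarrow> bool" where
  "equational_theory E \<longleftrightarrow> equiv UNIV E
     \<and> (\<forall>u v p s. (u, v) \<in> E \<longrightarrow> (p @ u @ s, p @ v @ s) \<in> E)
     \<and> (\<forall>u v \<sigma>. (u, v) \<in> E \<longrightarrow> (subst \<sigma> u, subst \<sigma> v) \<in> E)"

definition isoterm :: "(word \<times> word) set \<Rightarrow> word \<Rightarrow> bool" where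
  "isoterm E w \<longleftrightarrow> (\<forall>w'. (w, w') \<in> E \<longrightarrow> w' = w)"

inductive tau1 :: "word \<Rightarrow> word \<Rightarrow> bool" where
  tau1_refl: "tau1 u u"
| tau1_sym: "tau1 u v \<Longrightarrow> tau1 v u"
| tau1_trans: "tau1 u v \<Longrightarrow> tau1 v w \<Longrightarrow> tau1 u w"
| tau1_step: "tau1 (p @ [a] @ s) (p @ [a, a] @ s)"

definition mult_letters :: "word \<Rightarrow> nat set" where
  "mult_letters u = {a. count_list u a \<ge> 2}"

definition gamma :: "word \<Rightarrow> word \<Rightarrow> bool" where
  "gamma u v \<longleftrightarrow> tau1 u v \<and> mult_letters u = mult_letters v"

definition gclass :: "word \<Rightarrow> word set" where
  "gclass u = {v. gamma u v}"

text \<open>gamma-class of v is \<le> gamma-class of u: u = p v s in the quotient.\<close>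
definition gle :: "word \<Rightarrow> word \<Rightarrow> bool" where
  "gle v u \<longleftrightarrow> (\<exists>p s. gamma u (p @ v @ s))"

text \<open>The monoid M_gamma(W), W given by a set of representatives of gamma-classes.
  Elements: None is the zero (the collapsed ideal); Some X for a gamma-class X
  below some element of W.\<close>
definition Mg_carrier :: "word set \<Rightarrow> word set option set" where
  "Mg_carrier W = {None} \<union> {Some (gclass u) | u. \<exists>w\<in>W. gle u w}"

definition Mg_mult :: "word set \<Rightarrow> word set option \<Rightarrow> word set option \<Rightarrow> word set option" where
  "Mg_mult W X Y = (case (X, Y) of
      (Some A, Some B) \<Rightarrow>
        (if \<exists>x\<in>A. \<exists>y\<in>B. \<exists>w\<in>W. gle (x @ y) w
         then Some {z. \<exists>x\<in>A. \<exists>y\<in>B. gamma (x @ y) z} else None)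
    | _ \<Rightarrow> None)"

definition Mg_eval :: "word set \<Rightarrow> (nat \<Rightarrow> word set option) \<Rightarrow> word \<Rightarrow> word set option" where
  "Mg_eval W f u = foldr (\<lambda>a acc. Mg_mult W (f a) acc) u (Some (gclass []))"

definition Mg_satisfies :: "word set \<Rightarrow> word \<Rightarrow> word \<Rightarrow> bool" where
  "Mg_satisfies W u v \<longleftrightarrow>
     (\<forall>f. (\<forall>x. f x \<in> Mg_carrier W) \<longrightarrow> Mg_eval W f u = Mg_eval W f v)"

text \<open>The variety generated by M_gamma(W) is contained in the variety with
  equational theory E iff M_gamma(W) satisfies every identity of E.\<close>
definition Mg_in_variety :: "word set \<Rightarrow> (word \<times> word) set \<Rightarrow> bool" where
  "Mg_in_variety W E \<longleftrightarrow> (\<forall>(u, v) \<in> E. Mg_satisfies W u v)"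

end

theory Submission
  imports Defs
begin

text \<open>Since \<open>M\<^sub>\<gamma>(a\<^sup>+t)\<close> does not lie in \<open>V\<close>, some identity of \<open>V\<close> fails in it. Substituting
  for every letter a word representing its value (for the zero, a word below no element) gives
  an identity \<open>u \<approx> v\<close> of \<open>V\<close> with \<open>u \<le> a\<^sup>+t\<close> and \<open>u\<close>, \<open>v\<close> in different \<open>\<gamma>\<close>-classes. As \<open>t\<close> is
  an isoterm, a set of letters occurring at most once on one side occurs equally often on the
  other; since \<open>u\<close> is a factor of some \<open>a\<^sup>kt\<close>, this forces \<open>u = a\<^sup>mt\<close> and \<open>v = a\<^sup>ita\<^sup>j\<close> with
  \<open>m, j \<ge> 1\<close>. Writing \<open>x\<close> for \<open>a\<close>, renaming \<open>t\<close> to \<open>s\<close>, multiplying by \<open>xt\<close> on the left and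
  collapsing powers with \<open>xwx \<approx> xwx\<^sup>n\<close> (a consequence of \<open>xtx \<approx> xtx\<^sup>2\<close>) turns this identity
  into \<open>xtxs \<approx> xtxsx\<close>.\<close>

lemma tau1_context: "tau1 u v \<Longrightarrow> tau1 (p @ u @ s) (p @ v @ s)"
proof (induction rule: tau1.induct)
  case (tau1_refl u)
  show ?case by (rule tau1.tau1_refl)
next
  case (tau1_sym u v)
  then show ?case by (blast intro: tau1.tau1_sym)
next
  case (tau1_trans u v w)
  then show ?case by (blast intro: tau1.tau1_trans)
next
  case (tau1_step q a r)
  from tau1.tau1_step[of "p @ q" a "r @ s"] show ?case by simp
qed

lemma tau1_append: "tau1 x x' \<Longrightarrow> tau1 y y' \<Longrightarrow> tau1 (x @ y) (x' @ y')"
  using tau1_context[of x x' "[]" y] tau1_context[of y y' x' "[]"] tau1_trans by auto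

lemma tau1_set_eq: "tau1 u v \<Longrightarrow> set u = set v"
  by (induction rule: tau1.induct) auto

lemma tau1_remdups_adj_eq: "tau1 u v \<Longrightarrow> remdups_adj u = remdups_adj v"
proof (induction rule: tau1.induct)
  case (tau1_step p a s)
  have "remdups_adj (p @ a # a # s) = remdups_adj (p @ [a]) @ tl (remdups_adj (a # a # s))"
    by (rule remdups_adj_append)
  also have "\<dots> = remdups_adj (p @ [a]) @ tl (remdups_adj (a # s))" by simp
  also have "\<dots> = remdups_adj (p @ a # s)" by (rule remdups_adj_append[symmetric])
  finally show ?case by simp
qed auto

lemma tau1_replicate: "tau1 (replicate (Suc k) a) [a]"
proof (induction k)
  case 0
  show ?case by (simp add: tau1_refl)
next
  case (Suc k)
  have "tau1 (replicate (Suc k) a) (replicate (Suc (Suc k)) a)"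
    using tau1_step[of "[]" a "replicate k a"] by simp
  then show ?case using Suc.IH tau1_sym tau1_trans by blast
qed

lemma mult_letters_append:
  "mult_letters (x @ y) = mult_letters x \<union> mult_letters y \<union> (set x \<inter> set y)"
proof -
  have "a \<in> set z \<longleftrightarrow> 1 \<le> count_list z a" for a :: nat and z
    using count_list_0_iff[of z a] by auto
  then show ?thesis
    unfolding mult_letters_def by auto
qed

lemma count_list_replicate: "count_list (replicate m a) x = (if x = a then m else 0)"
  by (induction m) auto

lemma gamma_refl: "gamma u u"
  by (simp add: gamma_def tau1_refl)

lemma gamma_sym: "gamma u v \<Longrightarrow> gamma v u"
  by (auto simp: gamma_def intro: tau1_sym)

lemma gamma_trans: "gamma u v \<Longrightarrow> gamma v w \<Longrightarrow> gamma u w"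
  by (auto simp: gamma_def intro: tau1_trans)

lemma gamma_append: "gamma x x' \<Longrightarrow> gamma y y' \<Longrightarrow> gamma (x @ y) (x' @ y')"
  unfolding gamma_def
  using tau1_append tau1_set_eq[of x x'] tau1_set_eq[of y y'] by (simp add: mult_letters_append)

lemma gamma_replicate_append:
  assumes "m = n \<or> (2 \<le> m \<and> 2 \<le> n)"
  shows "gamma (replicate m a @ s) (replicate n a @ s)"
  using assms
proof
  assume "2 \<le> m \<and> 2 \<le> n"
  then obtain m' n' where mn: "m = Suc m'" "n = Suc n'" and "2 \<le> m" "2 \<le> n"
    by (metis Suc_le_D numeral_2_eq_2)
  have "tau1 (replicate m a) (replicate n a)"
    using tau1_replicate[of m' a] tau1_replicate[of n' a] mn tau1_sym tau1_trans by blast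
  moreover have "mult_letters (replicate m a) = mult_letters (replicate n a)"
    using \<open>2 \<le> m\<close> \<open>2 \<le> n\<close> by (auto simp: mult_letters_def count_list_replicate)
  ultimately have "gamma (replicate m a) (replicate n a)"
    by (simp add: gamma_def)
  then show ?thesis by (rule gamma_append[OF _ gamma_refl])
qed (simp add: gamma_refl)

lemma gclass_eq: "gamma u v \<Longrightarrow> gclass u = gclass v"
  unfolding gclass_def using gamma_sym gamma_trans by blast

lemma gle_gamma: "gamma v v' \<Longrightarrow> gle v w \<Longrightarrow> gle v' w"
  unfolding gle_def using gamma_append[OF gamma_refl gamma_append[OF _ gamma_refl]] gamma_trans
  by blast

lemma gle_appendD: "gle (x @ y) w \<Longrightarrow> gle x w \<and> gle y w"
  unfolding gle_def by (metis append.assoc)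

lemma gle_Nil: "gle [] w"
  unfolding gle_def using gamma_refl[of w] by (metis append.right_neutral append_Nil)

lemma single_occurrence_decomp:
  assumes "set w \<subseteq> {a, t}" and "count_list w t = 1"
  obtains i j where "w = replicate i a @ t # replicate j a"
proof -
  obtain p r where w: "w = p @ t # r" and "t \<notin> set p" "count_list r t = 0"
    using count_list_Suc_split_first[of w t 0] assms(2) by auto
  then have "set p \<subseteq> {a}" "set r \<subseteq> {a}"
    using assms(1) by (auto simp: count_list_0_iff)
  then have "p = replicate (length p) a" "r = replicate (length r) a"
    by (auto intro: replicate_eqI)
  then show ?thesis using that w by metis
qed

lemma gamma_aat_shape:
  assumes "gamma [a, a, t] z" and "a \<noteq> t"
  obtains k where "z = replicate k a @ [t]"
proof -
  have tau: "tau1 [a, a, t] z"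
    using assms(1) by (simp add: gamma_def)
  have rd: "remdups_adj z = [a, t]"
    using tau1_remdups_adj_eq[OF tau] assms(2) by simp
  have set_z: "set z = {a, t}"
    using tau1_set_eq[OF tau] by simp
  have "mult_letters z = mult_letters [a, a, t]"
    using assms(1) by (simp add: gamma_def)
  also have "\<dots> = {a}"
    using assms(2) by (auto simp: mult_letters_def)
  finally have "\<not> 2 \<le> count_list z t"
    using assms(2) unfolding mult_letters_def by (metis mem_Collect_eq singletonD)
  moreover have "count_list z t \<noteq> 0"
    using set_z by (simp add: count_list_0_iff)
  ultimately have "count_list z t = 1"
    by linarith
  then obtain i j where z: "z = replicate i a @ t # replicate j a"
    using single_occurrence_decomp[of z a t] set_z by auto
  have "last z = t"
    using rd last_remdups_adj[of z] by simp
  have "j = 0"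
  proof (rule ccontr)
    assume "j \<noteq> 0"
    then have "last z = a"
      using z by simp
    then show False
      using \<open>last z = t\<close> assms(2) by simp
  qed
  then show ?thesis using that z by simp
qed

lemma factor_replicate:
  assumes "p @ u @ s = replicate k a"
  shows "u = replicate (length u) a"
proof -
  have "x = a" if "x \<in> set u" for x
  proof -
    have "x \<in> set (replicate k a)"
      using that by (simp flip: assms)
    then show ?thesis by simp
  qed
  then show ?thesis
    by (intro replicate_eqI) auto
qed

lemma factor_replicate_snoc:
  assumes "p @ u @ s = replicate k a @ [t]"
  shows "(\<exists>m. u = replicate m a) \<or> (\<exists>m. u = replicate m a @ [t])"
proof (cases s rule: rev_cases)
  case Nil
  show ?thesis
  proof (cases u rule: rev_cases)
    case (snoc u' c)
    have "(p @ u') @ [c] = replicate k a @ [t]"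
      using assms Nil snoc by simp
    then have "p @ u' = replicate k a" "c = t"
      by (simp_all only: append1_eq_conv)
    then have "u = replicate (length u') a @ [t]"
      using factor_replicate[of p u' "[]"] snoc by simp
    then show ?thesis by blast
  qed auto
next
  case (snoc s' c)
  have "(p @ u @ s') @ [c] = replicate k a @ [t]"
    using assms unfolding snoc by (simp only: append_assoc)
  then have "p @ u @ s' = replicate k a"
    by (simp only: append1_eq_conv)
  then have "u = replicate (length u) a"
    by (rule factor_replicate)
  then show ?thesis by blast
qed

lemma gle_aat_shape:
  assumes "gle u [a, a, t]" and "a \<noteq> t"
  shows "(\<exists>m. u = replicate m a) \<or> (\<exists>m. u = replicate m a @ [t])"
proof -
  obtain p s where "gamma [a, a, t] (p @ u @ s)"
    using assms(1) unfolding gle_def by blast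
  then obtain k where "p @ u @ s = replicate k a @ [t]"
    using gamma_aat_shape[OF _ assms(2)] by metis
  then show ?thesis
    by (rule factor_replicate_snoc)
qed

lemma ta_not_gle_aat: "a \<noteq> t \<Longrightarrow> \<not> gle [t, a] [a, a, t]"
proof
  assume "a \<noteq> t" and "gle [t, a] [a, a, t]"
  from gle_aat_shape[OF this(2,1)] show False
  proof (elim disjE exE)
    fix m
    assume "[t, a] = replicate m a"
    then have "t \<in> set (replicate m a)"
      by (metis list.set_intros(1))
    then show False
      using \<open>a \<noteq> t\<close> by simp
  next
    fix m
    assume "[t, a] = replicate m a @ [t]"
    then have "last [t, a] = t"
      by simp
    then show False
      using \<open>a \<noteq> t\<close> by simp
  qed
qed

lemma Mg_mult_gclass:
  "Mg_mult W (Some (gclass y)) (Some (gclass z)) =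
     (if \<exists>w\<in>W. gle (y @ z) w then Some (gclass (y @ z)) else None)"
proof -
  have below: "(\<exists>x\<in>gclass y. \<exists>x'\<in>gclass z. \<exists>w\<in>W. gle (x @ x') w) \<longleftrightarrow>
      (\<exists>w\<in>W. gle (y @ z) w)"
    unfolding gclass_def using gamma_append gamma_sym gle_gamma gamma_refl by blast
  have "{q. \<exists>x\<in>gclass y. \<exists>x'\<in>gclass z. gamma (x @ x') q} = gclass (y @ z)"
    unfolding gclass_def using gamma_append gamma_trans gamma_refl by blast
  then show ?thesis
    unfolding Mg_mult_def using below by simp
qed

text \<open>The word \<open>z\<close> represents the zero of \<open>M\<^sub>\<gamma>(W)\<close>; it is meant to lie below no element of \<open>W\<close>.\<close>

definition Mg_rep :: "word set \<Rightarrow> word \<Rightarrow> (nat \<Rightarrow> word set option) \<Rightarrow> nat \<Rightarrow> word" where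
  "Mg_rep W z f c =
     (case f c of None \<Rightarrow> z | Some X \<Rightarrow> (SOME u. X = gclass u \<and> (\<exists>w\<in>W. gle u w)))"

lemma Mg_rep_Some:
  assumes "f c \<in> Mg_carrier W" and "f c \<noteq> None"
  shows "f c = Some (gclass (Mg_rep W z f c)) \<and> (\<exists>w\<in>W. gle (Mg_rep W z f c) w)"
proof -
  obtain u where u: "f c = Some (gclass u)" "\<exists>w\<in>W. gle u w"
    using assms unfolding Mg_carrier_def by auto
  then have "\<exists>v. gclass u = gclass v \<and> (\<exists>w\<in>W. gle v w)"
    by blast
  then have "gclass u = gclass (Mg_rep W z f c) \<and> (\<exists>w\<in>W. gle (Mg_rep W z f c) w)"
    unfolding Mg_rep_def using u(1) by simp (rule someI_ex)
  then show ?thesis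
    using u(1) by simp
qed

lemma Mg_eval_subst_rep:
  assumes "W \<noteq> {}" and zero: "\<forall>w\<in>W. \<not> gle z w" and f: "\<forall>c. f c \<in> Mg_carrier W"
  shows "Mg_eval W f u =
    (if \<exists>w\<in>W. gle (subst (Mg_rep W z f) u) w
     then Some (gclass (subst (Mg_rep W z f) u)) else None)"
proof (induction u)
  case Nil
  show ?case
    using \<open>W \<noteq> {}\<close> by (auto simp: Mg_eval_def subst_def gle_Nil)
next
  case (Cons c u)
  let ?r = "Mg_rep W z f"
  have eval: "Mg_eval W f (c # u) = Mg_mult W (f c) (Mg_eval W f u)"
    by (simp add: Mg_eval_def)
  have subst: "subst ?r (c # u) = ?r c @ subst ?r u"
    by (simp add: subst_def)
  show ?case
  proof (cases "f c")
    case None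
    then have "?r c = z"
      by (simp add: Mg_rep_def)
    then have "\<not> (\<exists>w\<in>W. gle (subst ?r (c # u)) w)"
      using zero gle_appendD unfolding subst by metis
    then show ?thesis
      using eval None by (simp add: Mg_mult_def)
  next
    case (Some X)
    then have fc: "f c = Some (gclass (?r c))"
      using Mg_rep_Some[OF f[rule_format]] by simp
    show ?thesis
    proof (cases "\<exists>w\<in>W. gle (subst ?r u) w")
      case True
      then show ?thesis
        using eval fc Cons.IH subst by (simp add: Mg_mult_gclass)
    next
      case False
      then have "\<not> (\<exists>w\<in>W. gle (subst ?r (c # u)) w)"
        using gle_appendD[of "?r c" "subst ?r u"] unfolding subst by blast
      then show ?thesis
        using eval fc Cons.IH False by (simp add: Mg_mult_def)
    qed
  qed
qed

lemma subst_count_replicate: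
  "subst (\<lambda>c. if P c then [t] else []) w = replicate (length (filter P w)) t"
  by (induction w) (auto simp: subst_def)

locale eq_theory =
  fixes E :: "(word \<times> word) set"
  assumes equational_theory: "equational_theory E"
begin

lemma E_refl: "(u, u) \<in> E"
  using equational_theory unfolding equational_theory_def equiv_def by (metis UNIV_I refl_onD)

lemma E_sym: "(u, v) \<in> E \<Longrightarrow> (v, u) \<in> E"
  using equational_theory unfolding equational_theory_def equiv_def by (blast dest: symD)

lemma E_trans: "(u, v) \<in> E \<Longrightarrow> (v, w) \<in> E \<Longrightarrow> (u, w) \<in> E"
  using equational_theory unfolding equational_theory_def equiv_def by (blast dest: transD)

lemma E_context: "(u, v) \<in> E \<Longrightarrow> (p @ u @ s, p @ v @ s) \<in> E"
  using equational_theory unfolding equational_theory_def by blast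

lemma E_subst: "(u, v) \<in> E \<Longrightarrow> (subst \<sigma> u, subst \<sigma> v) \<in> E"
  using equational_theory unfolding equational_theory_def by blast

lemma Mg_in_variety_witness:
  assumes "W \<noteq> {}" and "\<forall>w\<in>W. \<not> gle z w" and "\<not> Mg_in_variety W E"
  obtains u v where "(u, v) \<in> E" and "\<exists>w\<in>W. gle u w" and "\<not> gamma u v"
proof -
  obtain u v f where uv: "(u, v) \<in> E" and f: "\<forall>c. f c \<in> Mg_carrier W"
    and differ: "Mg_eval W f u \<noteq> Mg_eval W f v"
    using assms(3) unfolding Mg_in_variety_def Mg_satisfies_def by blast
  define u' where "u' = subst (Mg_rep W z f) u"
  define v' where "v' = subst (Mg_rep W z f) v"
  have "(u', v') \<in> E" and "(v', u') \<in> E"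
    unfolding u'_def v'_def using E_subst E_sym uv by blast+
  have distinct_values: "(if \<exists>w\<in>W. gle u' w then Some (gclass u') else None) \<noteq>
      (if \<exists>w\<in>W. gle v' w then Some (gclass v') else None)"
    using differ Mg_eval_subst_rep[OF assms(1,2) f] unfolding u'_def v'_def by metis
  have "\<not> gamma u' v'"
  proof
    assume uv': "gamma u' v'"
    then have "(\<exists>w\<in>W. gle u' w) = (\<exists>w\<in>W. gle v' w)"
      using gle_gamma gamma_sym by blast
    then show False
      using distinct_values gclass_eq[OF uv'] by metis
  qed
  moreover have "(\<exists>w\<in>W. gle u' w) \<or> (\<exists>w\<in>W. gle v' w)"
    using distinct_values by (auto split: if_splits)
  ultimately show ?thesis
    using that \<open>(u', v') \<in> E\<close> \<open>(v', u') \<in> E\<close> gamma_sym by blast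
qed

lemma isoterm_replicate:
  assumes "isoterm E [t]" and "(replicate m t, replicate n t) \<in> E" and "m \<le> 1"
  shows "n = m"
proof (cases m)
  case 0
  have "([t] @ replicate m t @ [], [t] @ replicate n t @ []) \<in> E"
    using E_context[OF assms(2)] .
  then have "([t], t # replicate n t) \<in> E"
    using 0 by simp
  then have "t # replicate n t = [t]"
    using assms(1) unfolding isoterm_def by blast
  then show ?thesis
    using 0 by simp
next
  case (Suc k)
  then have "([t], replicate n t) \<in> E"
    using assms(2,3) by simp
  then have "replicate n t = [t]"
    using assms(1) unfolding isoterm_def by blast
  then have "n = 1"
    by (metis length_replicate length_Cons list.size(3) One_nat_def)
  then show ?thesis
    using Suc assms(3) by simp
qed

lemma isoterm_count_eq:
  assumes "isoterm E [t]" and "(u, v) \<in> E"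
    and "length (filter P u) \<le> 1 \<or> length (filter P v) \<le> 1"
  shows "length (filter P u) = length (filter P v)"
proof -
  have "(replicate (length (filter P u)) t, replicate (length (filter P v)) t) \<in> E"
    using E_subst[OF assms(2), of "\<lambda>c. if P c then [t] else []"]
    by (simp add: subst_count_replicate)
  then show ?thesis
    using assms(1,3) isoterm_replicate E_sym by metis
qed

lemma isoterm_replicate_gamma:
  assumes "isoterm E [t]" and "(replicate m a, v) \<in> E"
  shows "gamma (replicate m a) v"
proof -
  have "length (filter (\<lambda>c. c \<noteq> a) v) = 0"
    using isoterm_count_eq[OF assms, of "\<lambda>c. c \<noteq> a"] by simp
  then have "v = replicate (length v) a"
    by (auto simp: filter_empty_conv intro: replicate_eqI)
  then obtain n where v: "v = replicate n a"
    by blast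
  then have "m = n \<or> (2 \<le> m \<and> 2 \<le> n)"
    using isoterm_count_eq[OF assms, of "(=) a"] by (cases "m \<le> 1 \<or> n \<le> 1") auto
  then show ?thesis
    using gamma_replicate_append[of m n a "[]"] v by simp
qed

lemma isoterm_aat_identity_shape:
  assumes "isoterm E [t]" and "a \<noteq> t" and "(replicate m a @ [t], v) \<in> E"
    and "\<not> gamma (replicate m a @ [t]) v"
  obtains i j where "1 \<le> m" and "1 \<le> j" and "v = replicate i a @ t # replicate j a"
proof -
  have "length (filter (\<lambda>c. c \<notin> {a, t}) v) = 0"
    using isoterm_count_eq[OF assms(1,3), of "\<lambda>c. c \<notin> {a, t}"] by simp
  then have "set v \<subseteq> {a, t}"
    by (auto simp: filter_empty_conv)
  moreover have "count_list v t = 1"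
    using isoterm_count_eq[OF assms(1,3), of "(=) t"] assms(2)
    by (simp add: count_list_eq_length_filter)
  ultimately obtain i j where v: "v = replicate i a @ t # replicate j a"
    by (rule single_occurrence_decomp)
  have counts: "m = i + j \<or> (2 \<le> m \<and> 2 \<le> i + j)"
    using isoterm_count_eq[OF assms(1,3), of "(=) a"] assms(2) v
    by (cases "m \<le> 1 \<or> i + j \<le> 1") auto
  have "j \<noteq> 0"
  proof
    assume "j = 0"
    then have "gamma (replicate m a @ [t]) v"
      using gamma_replicate_append[of m i a "[t]"] counts v by simp
    then show False
      using assms(4) by contradiction
  qed
  moreover have "m \<noteq> 0"
    using counts \<open>j \<noteq> 0\<close> by auto
  ultimately show ?thesis
    by (intro that[OF _ _ v]) auto
qed

lemma isoterm_aat_separating_identity: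
  assumes "isoterm E [t]" and "a \<noteq> t" and "(u, v) \<in> E" and "gle u [a, a, t]"
    and "\<not> gamma u v"
  obtains m i j where "1 \<le> m" and "1 \<le> j"
    and "(replicate m a @ [t], replicate i a @ t # replicate j a) \<in> E"
proof -
  obtain m where u: "u = replicate m a @ [t]"
    using gle_aat_shape[OF assms(4,2)] isoterm_replicate_gamma[OF assms(1)] assms(3,5) by blast
  then show ?thesis
    using isoterm_aat_identity_shape[OF assms(1,2)] assms(3,5) that by metis
qed

lemma xwx_power_collapse:
  assumes xtx: "([x, t, x], [x, t, x, x]) \<in> E" and "x \<noteq> t"
  shows "(x # w @ replicate (Suc n) x, x # w @ [x]) \<in> E"
proof (induction n)
  case 0
  show ?case by (simp add: E_refl)
next
  case (Suc n)
  have "(subst (\<lambda>c. if c = t then w else [c]) [x, t, x],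
         subst (\<lambda>c. if c = t then w else [c]) [x, t, x, x]) \<in> E"
    using E_subst[OF xtx] .
  then have "([x] @ w @ [x], [x] @ w @ [x, x]) \<in> E"
    using \<open>x \<noteq> t\<close> by (simp add: subst_def)
  then have "(x # w @ x # replicate n x, x # w @ x # x # replicate n x) \<in> E"
    using E_context[of "x # w @ [x]" "x # w @ [x, x]" "[]" "replicate n x"] by simp
  then have "(x # w @ replicate (Suc (Suc n)) x, x # w @ replicate (Suc n) x) \<in> E"
    using E_sym by (simp add: replicate_append_same)
  then show ?case
    using Suc.IH E_trans by blast
qed

lemma xtxs_xtxsx_from_separating:
  assumes xtx: "([x, t, x], [x, t, x, x]) \<in> E" and "x \<noteq> t"
    and separating: "(replicate m x @ [t], replicate i x @ t # replicate j x) \<in> E"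
    and "1 \<le> m" and "1 \<le> j"
  shows "([x, t, x, s], [x, t, x, s, x]) \<in> E"
proof -
  obtain m' j' where m: "m = Suc m'" and j: "j = Suc j'"
    using assms(4,5) by (metis Suc_le_D One_nat_def)
  note collapse = xwx_power_collapse[OF xtx \<open>x \<noteq> t\<close>]
  have "(subst (\<lambda>c. if c = t then [s] else [c]) (replicate m x @ [t]),
         subst (\<lambda>c. if c = t then [s] else [c]) (replicate i x @ t # replicate j x)) \<in> E"
    using E_subst[OF separating] .
  then have "(replicate m x @ [s], replicate i x @ s # replicate j x) \<in> E"
    using \<open>x \<noteq> t\<close> by (simp add: subst_def)
  then have shifted:
      "(x # t # replicate m x @ [s], x # t # replicate i x @ s # replicate j x) \<in> E"
    using E_context[of _ _ "[x, t]" "[]"] by simp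
  have "(x # t # replicate m x @ [s], [x, t, x, s]) \<in> E"
    using E_context[OF collapse[of "[t]" m'], of "[]" "[s]"] m by simp
  then have xtxs: "([x, t, x, s], x # t # replicate i x @ s # replicate j x) \<in> E"
    using E_trans[OF E_sym shifted] by blast
  show ?thesis
  proof (cases i)
    case 0
    have "(x # t # s # replicate j x, [x, t, s, x]) \<in> E"
      using collapse[of "[t, s]" j'] j by simp
    then have xtsx: "([x, t, x, s], [x, t, s, x]) \<in> E"
      using E_trans[OF xtxs] 0 by simp
    have "([x, t, x, s, x], [x, t, s, x, x]) \<in> E"
      using E_context[OF xtsx, of "[]" "[x]"] by simp
    moreover have "([x, t, s, x, x], [x, t, s, x]) \<in> E"
      using collapse[of "[t, s]" 1] by (simp add: numeral_2_eq_2)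
    ultimately have "([x, t, x, s, x], [x, t, s, x]) \<in> E"
      by (rule E_trans)
    then show ?thesis
      using E_trans[OF xtsx E_sym] by blast
  next
    case (Suc i')
    have "(x # t # replicate i x @ s # replicate j x, x # t # x # s # replicate j x) \<in> E"
      using E_context[OF collapse[of "[t]" i'], of "[]" "s # replicate j x"] Suc by simp
    moreover have "(x # t # x # s # replicate j x, [x, t, x, s, x]) \<in> E"
      using collapse[of "[t, x, s]" j'] j by simp
    ultimately show ?thesis
      using E_trans[OF xtxs E_trans] by blast
  qed
qed

end

text \<open>Letters: x = 0, t = 1, s = 2; a = 0 in a^+t (represented by aat).\<close>
theorem lemma4p1:
  fixes E :: "(word \<times> word) set"
  assumes "equational_theory E"
    and "isoterm E [1]"
    and "([0, 1, 0], [0, 1, 0, 0]) \<in> E"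
    and "\<not> Mg_in_variety {[0, 0, 1]} E"
  shows "([0, 1, 0, 2], [0, 1, 0, 2, 0]) \<in> E"
proof -
  interpret eq_theory E
    using assms(1) by unfold_locales
  have "\<forall>w\<in>{[0, 0, 1]}. \<not> gle [1, 0] w"
    using ta_not_gle_aat[of 0 1] by simp
  then obtain u v where "(u, v) \<in> E" and "\<exists>w\<in>{[0, 0, 1]}. gle u w" and "\<not> gamma u v"
    by (rule Mg_in_variety_witness[OF insert_not_empty _ assms(4)])
  then obtain m i j where "1 \<le> m" and "1 \<le> j"
    and "(replicate m 0 @ [1], replicate i 0 @ 1 # replicate j 0) \<in> E"
    by (auto intro: isoterm_aat_separating_identity[OF assms(2) zero_neq_one])
  then show ?thesis
    by (intro xtxs_xtxsx_from_separating[OF assms(3) zero_neq_one])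
qed

end
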